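(* Let $F:\mathbb{R}^n\rightrightarrows\mathbb{R}^n$ be a (possibly multi-valued) mapping and consider the system $x_{t+1}=x_t+u_t$, $y_t\in F(x_t+u_t)$, $t\in\mathbb{N}_0$, with $x_t,u_t,y_t\in\mathbb{R}^n$. This system is cyclo-passive if and only if $F$ is cyclically monotone.
   Context: A trajectory $t\mapsto(x_t,u_t,y_t)$ is admissible if $x_{t+1}=x_t+u_t$ and $y_t\in F(x_t+u_t)$ for all $t\in\mathbb{N}_0$. The system is cyclo-passive if $\sum_{t=t_1}^{t_2-1}u_t^\top y_t\ge 0$ holds for all $t_1,t_2\in\mathbb{N}_0$ with $t_1\le t_2$ and all admissible trajectories satisfying $x_{t_2}=x_{t_1}$. The mapping $F$ is cyclically monotone if $\sum_{j=0}^m w_j^\top(v_j-v_{j+1})\ge 0$ for every $m\in\mathbb{N}_0$, all points $v_0,\ldots,v_m\in\mathbb{R}^n$, all $w_j\in F(v_j)$ ($j=0,\dots,m$), where $v_{m+1}:=v_0$. *)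

theory Defs
  imports "HOL-Analysis.Analysis"
begin

definition admissible ::
  "(real^'n \<Rightarrow> (real^'n) set) \<Rightarrow> (nat \<Rightarrow> real^'n) \<Rightarrow> (nat \<Rightarrow> real^'n) \<Rightarrow> (nat \<Rightarrow> real^'n) \<Rightarrow> bool"
  where "admissible F x u y \<longleftrightarrow>
    (\<forall>t. x (Suc t) = x t + u t \<and> y t \<in> F (x t + u t))"

definition cyclo_passive :: "(real^'n \<Rightarrow> (real^'n) set) \<Rightarrow> bool"
  where "cyclo_passive F \<longleftrightarrow>
    (\<forall>x u y t1 t2. admissible F x u y \<and> t1 \<le> t2 \<and> x t2 = x t1 \<longrightarrow>
       (\<Sum>t\<in>{t1..<t2}. u t \<bullet> y t) \<ge> 0)"

definition cyclically_monotone :: "(real^'n \<Rightarrow> (real^'n) set) \<Rightarrow> bool"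
  where "cyclically_monotone F \<longleftrightarrow>
    (\<forall>(m::nat) (v::nat \<Rightarrow> real^'n) (w::nat \<Rightarrow> real^'n).
       (\<forall>j\<le>m. w j \<in> F (v j)) \<longrightarrow>
       (\<Sum>j\<le>m. w j \<bullet> (v j - (if j = m then v 0 else v (Suc j)))) \<ge> 0)"

end

theory Submission
  imports Defs
begin

text \<open>Both properties say that the sum of the increments \<open>p (k+1) - p k\<close> of a closed walk,
  each paired with a value of \<open>F\<close> at the endpoint \<open>p (k+1)\<close>, is nonnegative.
  For a trajectory the walk is \<open>x t\<^sub>1, \<dots>, x t\<^sub>2\<close> with increments \<open>u t\<close>;
  for a cycle \<open>v 0, \<dots>, v m\<close> it is the cycle traversed backwards.\<close>

definition closed_walk_monotone :: "('a::real_inner \<Rightarrow> 'a set) \<Rightarrow> bool"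
  where "closed_walk_monotone F \<longleftrightarrow>
    (\<forall>N p q. p N = p 0 \<and> (\<forall>k<N. q k \<in> F (p (Suc k))) \<longrightarrow>
       0 \<le> (\<Sum>k<N. (p (Suc k) - p k) \<bullet> q k))"

lemma closed_walk_monotoneD:
  assumes "closed_walk_monotone F" "p N = p 0" "\<And>k. k < N \<Longrightarrow> q k \<in> F (p (Suc k))"
  shows "0 \<le> (\<Sum>k<N. (p (Suc k) - p k) \<bullet> q k)"
  using assms unfolding closed_walk_monotone_def by blast

lemma cyclically_monotoneD:
  assumes "cyclically_monotone F" "\<And>j. j \<le> m \<Longrightarrow> w j \<in> F (v j)"
  shows "0 \<le> (\<Sum>j\<le>m. w j \<bullet> (v j - (if j = m then v 0 else v (Suc j))))"
  using assms unfolding cyclically_monotone_def by blast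

lemma cyclo_passiveD:
  assumes "cyclo_passive F" "admissible F x u y" "t\<^sub>1 \<le> t\<^sub>2" "x t\<^sub>2 = x t\<^sub>1"
  shows "0 \<le> (\<Sum>t\<in>{t\<^sub>1..<t\<^sub>2}. u t \<bullet> y t)"
  using assms unfolding cyclo_passive_def by blast

lemma closed_walk_monotone_imp_cyclically_monotone:
  fixes F :: "real^'n \<Rightarrow> (real^'n) set"
  assumes "closed_walk_monotone F"
  shows "cyclically_monotone F"
  unfolding cyclically_monotone_def
proof (intro allI impI)
  fix m :: nat and v w :: "nat \<Rightarrow> real^'n"
  assume graph: "\<forall>j\<le>m. w j \<in> F (v j)"
  define p where "p k = v (if k = 0 then 0 else Suc m - k)" for k
  have "p (Suc m) = p 0"
    by (simp add: p_def)
  moreover have "w (m - k) \<in> F (p (Suc k))" if "k < Suc m" for k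
    using graph that by (simp add: p_def)
  ultimately have "0 \<le> (\<Sum>k<Suc m. (p (Suc k) - p k) \<bullet> w (m - k))"
    by (rule closed_walk_monotoneD [OF assms])
  also have "\<dots> = (\<Sum>j<Suc m. (p (Suc (m - j)) - p (m - j)) \<bullet> w j)"
    by (rule sum.nat_diff_reindex [symmetric, THEN trans]) (auto intro!: sum.cong)
  also have "\<dots> = (\<Sum>j\<le>m. w j \<bullet> (v j - (if j = m then v 0 else v (Suc j))))"
    unfolding lessThan_Suc_atMost
    by (intro sum.cong) (auto simp: p_def Suc_diff_le inner_commute)
  finally show "0 \<le> (\<Sum>j\<le>m. w j \<bullet> (v j - (if j = m then v 0 else v (Suc j))))" .
qed

lemma cyclically_monotone_imp_closed_walk_monotone:
  fixes F :: "real^'n \<Rightarrow> (real^'n) set"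
  assumes "cyclically_monotone F"
  shows "closed_walk_monotone F"
  unfolding closed_walk_monotone_def
proof (intro allI impI, elim conjE)
  fix N and p q :: "nat \<Rightarrow> real^'n"
  assume closed: "p N = p 0" and walk: "\<forall>k<N. q k \<in> F (p (Suc k))"
  show "0 \<le> (\<Sum>k<N. (p (Suc k) - p k) \<bullet> q k)"
  proof (cases N)
    case 0
    then show ?thesis by simp
  next
    case (Suc m)
    define v where "v j = p (N - j)" for j
    define w where "w j = q (m - j)" for j
    have "w j \<in> F (v j)" if "j \<le> m" for j
      using walk that Suc by (simp add: v_def w_def Suc_diff_le)
    then have "0 \<le> (\<Sum>j\<le>m. w j \<bullet> (v j - (if j = m then v 0 else v (Suc j))))"
      by (rule cyclically_monotoneD [OF assms])
    also have "\<dots> = (\<Sum>j<N. (p (Suc (m - j)) - p (m - j)) \<bullet> q (m - j))"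
      unfolding Suc lessThan_Suc_atMost
      using closed Suc by (intro sum.cong) (auto simp: v_def w_def Suc_diff_le inner_commute)
    also have "\<dots> = (\<Sum>k<N. (p (Suc k) - p k) \<bullet> q k)"
      using sum.nat_diff_reindex [of "\<lambda>k. (p (Suc k) - p k) \<bullet> q k" N] Suc by simp
    finally show ?thesis .
  qed
qed

text \<open>A closed walk is realised by a trajectory that stops at its final point, repeating the
  last value of \<open>F\<close> used on the walk.\<close>
lemma cyclo_passive_imp_closed_walk_monotone:
  fixes F :: "real^'n \<Rightarrow> (real^'n) set"
  assumes "cyclo_passive F"
  shows "closed_walk_monotone F"
  unfolding closed_walk_monotone_def
proof (intro allI impI, elim conjE)
  fix N and p q :: "nat \<Rightarrow> real^'n"
  assume closed: "p N = p 0" and walk: "\<forall>k<N. q k \<in> F (p (Suc k))"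
  show "0 \<le> (\<Sum>k<N. (p (Suc k) - p k) \<bullet> q k)"
  proof (cases N)
    case 0
    then show ?thesis by simp
  next
    case (Suc m)
    define x where "x t = p (min t N)" for t
    define u where "u t = x (Suc t) - x t" for t
    define y where "y t = q (min t m)" for t
    have "x (Suc t) = p (Suc (min t m))" for t
      by (simp add: x_def Suc)
    then have "admissible F x u y"
      using walk Suc by (simp add: admissible_def u_def y_def)
    then have "0 \<le> (\<Sum>t\<in>{0..<N}. u t \<bullet> y t)"
      by (rule cyclo_passiveD [OF assms]) (simp_all add: x_def closed)
    also have "\<dots> = (\<Sum>k<N. (p (Suc k) - p k) \<bullet> q k)"
      unfolding atLeast0LessThan
      by (intro sum.cong) (auto simp: u_def x_def y_def Suc)
    finally show ?thesis .
  qed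
qed

lemma closed_walk_monotone_imp_cyclo_passive:
  fixes F :: "real^'n \<Rightarrow> (real^'n) set"
  assumes "closed_walk_monotone F"
  shows "cyclo_passive F"
  unfolding cyclo_passive_def
proof (intro allI impI, elim conjE)
  fix x u y :: "nat \<Rightarrow> real^'n" and t\<^sub>1 t\<^sub>2 :: nat
  assume adm: "admissible F x u y" and "t\<^sub>1 \<le> t\<^sub>2" and closed: "x t\<^sub>2 = x t\<^sub>1"
  have step: "x (Suc t) = x t + u t" "y t \<in> F (x (Suc t))" for t
    using adm by (simp_all add: admissible_def)
  have "0 \<le> (\<Sum>k<t\<^sub>2 - t\<^sub>1. (x (t\<^sub>1 + Suc k) - x (t\<^sub>1 + k)) \<bullet> y (t\<^sub>1 + k))"
    using \<open>t\<^sub>1 \<le> t\<^sub>2\<close> closed step(2)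
    by (intro closed_walk_monotoneD [OF assms, where p = "\<lambda>k. x (t\<^sub>1 + k)"]) simp_all
  also have "\<dots> = (\<Sum>t\<in>{t\<^sub>1..<t\<^sub>2}. u t \<bullet> y t)"
    by (simp add: sum.atLeastLessThan_shift_0 [of _ t\<^sub>1 t\<^sub>2] atLeast0LessThan step(1))
  finally show "0 \<le> (\<Sum>t\<in>{t\<^sub>1..<t\<^sub>2}. u t \<bullet> y t)" .
qed

theorem lemma4:
  fixes F :: "real^'n \<Rightarrow> (real^'n) set"
  shows "cyclo_passive F \<longleftrightarrow> cyclically_monotone F"
  using cyclo_passive_imp_closed_walk_monotone closed_walk_monotone_imp_cyclo_passive
    cyclically_monotone_imp_closed_walk_monotone closed_walk_monotone_imp_cyclically_monotone
  by blast

end
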